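(* Let $\Gamma$ be a non-amenable group with property RD$_p$ for some $p\in[1,2]$. Then $\mathrm{Lit}(\Gamma)\ge p$.
   Context: For $1\le p<\infty$, $\Gamma$ has property RD$_p$ if there exist a length function $L$ on $\Gamma$ (i.e. $L\colon\Gamma\to[0,\infty)$ with $L(e)=0$, $L(g^{-1})=L(g)$, $L(gh)\le L(g)+L(h)$) and a polynomial $P$ such that $\|a\|_{p\to p}\le P(d)\|a\|_p$ for every $a\in\mathbf{C}[\Gamma]$ supported in the $L$-ball of radius $d\ge0$, where $\|a\|_{p\to p}$ is the operator norm of left convolution by $a$ on $\ell^p(\Gamma)$. $T_1(\Gamma)$ is the space of all $f\colon\Gamma\to\mathbf{C}$ for which there exist $f_1,f_2\colon\Gamma\times\Gamma\to\mathbf{C}$ with $f(x^{-1}y)=f_1(x,y)+f_2(x,y)$ for all $x,y$, $\sup_x\sum_y|f_1(x,y)|<\infty$, $\sup_y\sum_x|f_2(x,y)|<\infty$; $\mathrm{Lit}(\Gamma)=\inf\{q>0:T_1(\Gamma)\subseteq\ell^q(\Gamma)\}$. *)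

theory Defs
  imports "HOL-Analysis.Analysis" "HOL-Algebra.Group" "HOL-Computational_Algebra.Polynomial"
begin

text \<open>A discrete group is a HOL-Algebra group G; functions on the group are
  functions on the carrier (values outside the carrier are irrelevant).\<close>

definition lp_space :: "('a, 'b) monoid_scheme \<Rightarrow> real \<Rightarrow> ('a \<Rightarrow> complex) set" where
  "lp_space G q = {f. (\<lambda>x. norm (f x) powr q) summable_on carrier G}"

definition lp_norm :: "('a, 'b) monoid_scheme \<Rightarrow> real \<Rightarrow> ('a \<Rightarrow> complex) \<Rightarrow> real" where
  "lp_norm G q f = (infsum (\<lambda>x. norm (f x) powr q) (carrier G)) powr (1 / q)"

definition length_function :: "('a, 'b) monoid_scheme \<Rightarrow> ('a \<Rightarrow> real) \<Rightarrow> bool" where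
  "length_function G L \<longleftrightarrow>
     (\<forall>g\<in>carrier G. L g \<ge> 0) \<and> L \<one>\<^bsub>G\<^esub> = 0 \<and>
     (\<forall>g\<in>carrier G. L (inv\<^bsub>G\<^esub> g) = L g) \<and>
     (\<forall>g\<in>carrier G. \<forall>h\<in>carrier G. L (g \<otimes>\<^bsub>G\<^esub> h) \<le> L g + L h)"

definition group_algebra :: "('a, 'b) monoid_scheme \<Rightarrow> ('a \<Rightarrow> complex) set" where
  "group_algebra G = {a. finite {x \<in> carrier G. a x \<noteq> 0}}"

definition conv :: "('a, 'b) monoid_scheme \<Rightarrow> ('a \<Rightarrow> complex) \<Rightarrow> ('a \<Rightarrow> complex) \<Rightarrow> 'a \<Rightarrow> complex" where
  "conv G a f x = (\<Sum>y\<in>{y \<in> carrier G. a y \<noteq> 0}. a y * f (inv\<^bsub>G\<^esub> y \<otimes>\<^bsub>G\<^esub> x))"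

text \<open>Property RD_p: ||a||_{p->p} <= P(d) ||a||_p for a supported in the L-ball of radius d;
  the operator-norm bound is written out as the inequality for all f in l^p.\<close>
definition property_RD :: "('a, 'b) monoid_scheme \<Rightarrow> real \<Rightarrow> bool" where
  "property_RD G p \<longleftrightarrow>
     (\<exists>L (P :: real poly). length_function G L \<and>
        (\<forall>d \<ge> 0. \<forall>a \<in> group_algebra G.
           (\<forall>x\<in>carrier G. a x \<noteq> 0 \<longrightarrow> L x \<le> d) \<longrightarrow>
           (\<forall>f \<in> lp_space G p.
              lp_norm G p (conv G a f) \<le> poly P d * lp_norm G p a * lp_norm G p f)))"

definition bounded_on :: "'a set \<Rightarrow> ('a \<Rightarrow> real) \<Rightarrow> bool" where
  "bounded_on S f \<longleftrightarrow> (\<exists>C. \<forall>x\<in>S. \<bar>f x\<bar> \<le> C)"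

definition amenable :: "('a, 'b) monoid_scheme \<Rightarrow> bool" where
  "amenable G \<longleftrightarrow>
     (\<exists>m :: ('a \<Rightarrow> real) \<Rightarrow> real.
        (\<forall>f g. bounded_on (carrier G) f \<longrightarrow> bounded_on (carrier G) g \<longrightarrow>
            m (\<lambda>x. f x + g x) = m f + m g) \<and>
        (\<forall>f c. bounded_on (carrier G) f \<longrightarrow> m (\<lambda>x. c * f x) = c * m f) \<and>
        (\<forall>f. bounded_on (carrier G) f \<longrightarrow> (\<forall>x\<in>carrier G. f x \<ge> 0) \<longrightarrow> m f \<ge> 0) \<and>
        m (\<lambda>x. 1) = 1 \<and>
        (\<forall>f. \<forall>g\<in>carrier G. bounded_on (carrier G) f \<longrightarrow>
            m (\<lambda>x. f (g \<otimes>\<^bsub>G\<^esub> x)) = m f))"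

definition T1 :: "('a, 'b) monoid_scheme \<Rightarrow> ('a \<Rightarrow> complex) set" where
  "T1 G = {f. \<exists>f1 f2 :: 'a \<Rightarrow> 'a \<Rightarrow> complex.
      (\<forall>x\<in>carrier G. \<forall>y\<in>carrier G. f (inv\<^bsub>G\<^esub> x \<otimes>\<^bsub>G\<^esub> y) = f1 x y + f2 x y) \<and>
      (\<exists>C. \<forall>x\<in>carrier G. (\<lambda>y. norm (f1 x y)) summable_on carrier G \<and>
                          infsum (\<lambda>y. norm (f1 x y)) (carrier G) \<le> C) \<and>
      (\<exists>C. \<forall>y\<in>carrier G. (\<lambda>x. norm (f2 x y)) summable_on carrier G \<and>
                          infsum (\<lambda>x. norm (f2 x y)) (carrier G) \<le> C)}"

text \<open>Lit(G) = inf {q > 0. T_1(G) \<subseteq> l^q(G)}, as an extended real (inf of empty set = \<infinity>).\<close>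
definition Lit :: "('a, 'b) monoid_scheme \<Rightarrow> ereal" where
  "Lit G = Inf {ereal q | q. q > 0 \<and> T1 G \<subseteq> lp_space G q}"

end

theory Submission
  imports Defs "HOL-Real_Asymp.Real_Asymp"
begin

text \<open>Let \<open>L\<close> and \<open>P\<close> witness property \<open>RD\<^sub>p\<close>. If the \<open>L\<close>-balls grow polynomially, suitable
  balls form a Folner sequence, and averaging over them along an ultrafilter gives an invariant
  mean; so the balls of a non-amenable group grow faster than any polynomial. Given \<open>q < p\<close>,
  this allows us to choose disjoint finite symmetric sets \<open>F\<^sub>n\<close> in balls of radii \<open>d\<^sub>n\<close> with
  \<open>|F\<^sub>n| \<ge> (2\<^sup>n (|P(d\<^sub>n)| + 1))\<^sup>s\<close>, \<open>s = qp/(p - q)\<close>.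
  By RD, convolution by \<open>1\<^bsub>F\<^sub>n\<^esub>\<close> has norm at most \<open>\<rho>\<^sub>n = |P(d\<^sub>n)| |F\<^sub>n|\<^sup>1\<^sup>/\<^sup>p\<close> on \<open>\<ell>\<^sup>p\<close>,
  so its resolvent at \<open>K\<^sub>n = 2\<rho>\<^sub>n + 1\<close> yields a positive weight \<open>\<phi>\<close> with
  \<open>\<Sum>\<^sub>z\<^sub>\<in>\<^sub>F\<^sub>n \<phi>(xz) \<le> K\<^sub>n \<phi>(x)\<close>; splitting \<open>1\<^bsub>F\<^sub>n\<^esub>(x\<inverse>y)\<close> in the ratio \<open>\<phi>(y) : \<phi>(x)\<close> writes
  it as a sum of a row-bounded and a column-bounded kernel with bound \<open>K\<^sub>n\<close>. Hence
  \<open>f = \<Sum>\<^sub>n c\<^sub>n 1\<^bsub>F\<^sub>n\<^esub>\<close> with \<open>c\<^sub>n = 1 / (2\<^sup>n (|P(d\<^sub>n)| + 1) |F\<^sub>n|\<^sup>1\<^sup>/\<^sup>p)\<close> lies in \<open>T\<^sub>1\<close>, since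
  \<open>c\<^sub>n K\<^sub>n \<le> 3 \<cdot> 2\<^sup>-\<^sup>n\<close>, whereas \<open>|F\<^sub>n| c\<^sub>n\<^sup>q \<ge> 1\<close> shows \<open>f \<notin> \<ell>\<^sup>q\<close>.\<close>

section \<open>Limits along ultrafilters\<close>

lemma Inf_chain_neq_bot:
  fixes C :: "'a filter set"
  assumes "C \<noteq> {}" "bot \<notin> C" and chain: "\<And>U V. U \<in> C \<Longrightarrow> V \<in> C \<Longrightarrow> U \<le> V \<or> V \<le> U"
  shows "Inf C \<noteq> bot"
proof -
  have base: "\<exists>W\<in>C. W \<le> inf U V" if "U \<in> C" "V \<in> C" for U V
    using chain[OF that] that by (metis inf.absorb1 inf.absorb2 order_refl)
  have "\<not> eventually (\<lambda>_. False) (Inf C)"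
    using assms(2) by (subst eventually_Inf_base[OF assms(1) base]) (auto simp: eventually_False)
  then show ?thesis by (simp add: eventually_False)
qed

lemma ultrafilter_le_exists:
  fixes F :: "'a filter"
  assumes "F \<noteq> bot"
  obtains U where "U \<noteq> bot" "U \<le> F" "\<And>P. eventually P U \<or> eventually (\<lambda>x. \<not> P x) U"
proof -
  let ?A = "{U. U \<noteq> bot \<and> U \<le> F}"
  have po: "partial_order_on ?A (relation_of (\<lambda>U V. V \<le> U) ?A)"
    by (rule partial_order_on_relation_ofI) auto
  have "\<exists>m\<in>?A. \<forall>a\<in>?A. a \<le> m \<longrightarrow> a = m"
  proof (rule predicate_Zorn[OF po])
    fix C assume C: "C \<in> Chains (relation_of (\<lambda>U V. V \<le> U) ?A)"
    have CA: "C \<subseteq> ?A" using Chains_relation_of[OF C] .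
    have chain: "U \<le> V \<or> V \<le> U" if "U \<in> C" "V \<in> C" for U V
      using C that unfolding Chains_def relation_of_def by auto
    show "\<exists>u\<in>?A. \<forall>a\<in>C. u \<le> a"
    proof (cases "C = {}")
      case True
      then show ?thesis using assms by auto
    next
      case False
      then have "Inf C \<in> ?A" using Inf_chain_neq_bot[OF False _ chain] CA by (auto intro: Inf_lower2)
      then show ?thesis by (auto intro: Inf_lower)
    qed
  qed
  then obtain U where U: "U \<noteq> bot" "U \<le> F" and max: "\<And>V. V \<noteq> bot \<Longrightarrow> V \<le> U \<Longrightarrow> V = U"
    using order_trans by blast
  have "eventually P U \<or> eventually (\<lambda>x. \<not> P x) U" for P
  proof (rule ccontr)
    assume none: "\<not> ?thesis"
    let ?V = "inf U (principal {x. P x})"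
    have "?V \<noteq> bot"
      using none by (auto simp: eventually_inf_principal trivial_limit_def)
    then have "?V = U" by (intro max) auto
    moreover have "eventually P ?V" by (simp add: eventually_inf_principal)
    ultimately show False using none by simp
  qed
  then show ?thesis using that U by blast
qed

lemma tendsto_Lim_ultrafilter:
  fixes s :: "'a \<Rightarrow> real"
  assumes U: "U \<noteq> bot" "\<And>P. eventually P U \<or> eventually (\<lambda>x. \<not> P x) U"
    and bounded: "\<And>x. \<bar>s x\<bar> \<le> C"
  shows "(s \<longlongrightarrow> Lim U s) U"
proof -
  have "filtermap s U \<noteq> bot" using U(1) by (simp add: filtermap_bot_iff)
  moreover have "s x \<in> {-C..C}" for x using bounded[of x] by auto
  then have "eventually (\<lambda>y. y \<in> {-C..C}) (filtermap s U)"
    by (auto simp: eventually_filtermap intro: always_eventually)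
  ultimately obtain l where nontriv: "inf (nhds l) (filtermap s U) \<noteq> bot"
    using compact_Icc[of "-C" C] unfolding compact_filter by blast
  have "(s \<longlongrightarrow> l) U"
  proof (rule topological_tendstoI)
    fix V assume V: "open V" "l \<in> V"
    show "eventually (\<lambda>x. s x \<in> V) U"
    proof (rule ccontr)
      assume "\<not> eventually (\<lambda>x. s x \<in> V) U"
      then have "eventually (\<lambda>y. y \<notin> V) (filtermap s U)"
        using U(2) by (auto simp: eventually_filtermap)
      moreover have "eventually (\<lambda>y. y \<in> V) (nhds l)"
        using V by (rule eventually_nhds_in_open)
      ultimately have "eventually (\<lambda>_. False) (inf (nhds l) (filtermap s U))"
        unfolding eventually_inf by blast
      then show False using nontriv by (simp add: trivial_limit_def)
    qed
  qed
  then show ?thesis using U(1) by (simp add: tendsto_Lim)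
qed

lemma tendsto_Lim_average_ultrafilter:
  fixes B :: "nat \<Rightarrow> 'a set" and f :: "'a \<Rightarrow> real"
  assumes U: "U \<noteq> bot" "\<And>P. eventually P U \<or> eventually (\<lambda>x. \<not> P x) U"
    and B: "\<And>j. finite (B j)" "\<And>j. B j \<noteq> {}" "\<And>j. B j \<subseteq> S" and f: "bounded_on S f"
  shows "((\<lambda>j. sum f (B j) / real (card (B j))) \<longlongrightarrow> Lim U (\<lambda>j. sum f (B j) / real (card (B j)))) U"
proof -
  obtain C where C: "\<And>x. x \<in> S \<Longrightarrow> \<bar>f x\<bar> \<le> C" using f unfolding bounded_on_def by blast
  have "\<bar>sum f (B j) / real (card (B j))\<bar> \<le> C" for j
  proof -
    have "\<bar>sum f (B j)\<bar> \<le> sum (\<lambda>_. C) (B j)"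
      using B(3) C by (intro order_trans[OF sum_abs] sum_mono) auto
    moreover have "real (card (B j)) > 0" using B by (simp add: card_gt_0_iff)
    ultimately show ?thesis by (simp add: divide_le_eq mult.commute)
  qed
  then show ?thesis by (rule tendsto_Lim_ultrafilter[OF U])
qed

section \<open>Polynomial growth implies amenability\<close>

lemma sum_diff_le_card_diff:
  fixes f :: "'a \<Rightarrow> real"
  assumes "finite A" "finite B" "card A = card B" and bounded: "\<And>x. x \<in> A \<union> B \<Longrightarrow> \<bar>f x\<bar> \<le> C"
  shows "\<bar>sum f A - sum f B\<bar> \<le> 2 * C * real (card (A - B))"
proof -
  have card_diff: "card (B - A) = card (A - B)"
    using assms(1-3) by (metis card_Diff_subset_Int finite_Int inf_commute)
  have "sum f A - sum f B = sum f (A - B) - sum f (B - A)"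
    using sum.Int_Diff[OF assms(1), of f B] sum.Int_Diff[OF assms(2), of f A]
    by (simp add: inf_commute)
  also have "\<bar>\<dots>\<bar> \<le> sum (\<lambda>x. \<bar>f x\<bar>) (A - B) + sum (\<lambda>x. \<bar>f x\<bar>) (B - A)"
    by (intro order_trans[OF abs_triangle_ineq4] add_mono sum_abs)
  also have "\<dots> \<le> sum (\<lambda>_. C) (A - B) + sum (\<lambda>_. C) (B - A)"
    using bounded by (intro add_mono sum_mono) auto
  finally show ?thesis using card_diff by simp
qed

lemma bounded_on_add:
  "bounded_on S f \<Longrightarrow> bounded_on S g \<Longrightarrow> bounded_on S (\<lambda>x. f x + g x)"
  unfolding bounded_on_def by (metis abs_triangle_ineq add_mono order_trans)

lemma bounded_on_scale: "bounded_on S f \<Longrightarrow> bounded_on S (\<lambda>x. c * f x)"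
  unfolding bounded_on_def by (metis abs_mult mult_left_mono abs_ge_zero)

context group
begin

lemma average_translate_diff_le:
  fixes f :: "'a \<Rightarrow> real"
  assumes B: "finite B" "B \<noteq> {}" "B \<subseteq> carrier G" and g: "g \<in> carrier G"
    and C: "\<And>x. x \<in> carrier G \<Longrightarrow> \<bar>f x\<bar> \<le> C"
  shows "\<bar>sum (\<lambda>x. f (g \<otimes> x)) B / real (card B) - sum f B / real (card B)\<bar>
    \<le> (2 * C) * (real (card ((\<lambda>x. g \<otimes> x) ` B - B)) / real (card B))"
proof -
  let ?gB = "(\<lambda>x. g \<otimes> x) ` B"
  have inj: "inj_on (\<lambda>x. g \<otimes> x) B" using inj_on_cmult[OF g] B(3) by (rule inj_on_subset)
  have "\<bar>sum f ?gB - sum f B\<bar> \<le> 2 * C * real (card (?gB - B))"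
  proof (rule sum_diff_le_card_diff)
    show "card ?gB = card B" using inj by (rule card_image)
    show "\<bar>f x\<bar> \<le> C" if "x \<in> ?gB \<union> B" for x
      using that B(3) g by (intro C) blast
  qed (use B in auto)
  moreover have "sum (\<lambda>x. f (g \<otimes> x)) B = sum f ?gB" using inj by (simp add: sum.reindex)
  moreover have "real (card B) > 0" using B by (simp add: card_gt_0_iff)
  ultimately show ?thesis by (simp add: diff_divide_distrib[symmetric] divide_le_eq)
qed

lemma amenable_if_Folner_sequence:
  fixes B :: "nat \<Rightarrow> 'a set"
  assumes fin: "\<And>j. finite (B j)" and nonempty: "\<And>j. B j \<noteq> {}" and sub: "\<And>j. B j \<subseteq> carrier G"
    and Folner: "\<And>g. g \<in> carrier G \<Longrightarrow>
      (\<lambda>j. real (card ((\<lambda>x. g \<otimes> x) ` B j - B j)) / real (card (B j))) \<longlonglongrightarrow> 0"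
  shows "amenable G"
proof -
  obtain U :: "nat filter" where U: "U \<noteq> bot" "U \<le> sequentially"
    and ultra: "\<And>P. eventually P U \<or> eventually (\<lambda>x. \<not> P x) U"
    using ultrafilter_le_exists[OF sequentially_bot] by blast
  define avg where "avg f j = sum f (B j) / real (card (B j))" for f :: "'a \<Rightarrow> real" and j
  define m where "m f = Lim U (avg f)" for f
  have card_pos: "real (card (B j)) > 0" for j using fin nonempty by (simp add: card_gt_0_iff)
  have avg_tendsto: "(avg f \<longlongrightarrow> m f) U" if "bounded_on (carrier G) f" for f
    unfolding avg_def m_def using U(1) ultra fin nonempty sub that by (rule tendsto_Lim_average_ultrafilter)
  have limit_unique: "m f = l" if "bounded_on (carrier G) f" "(avg f \<longlongrightarrow> l) U" for f l
    using tendsto_unique[OF U(1) avg_tendsto that(2)] that(1) by simp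
  have invariant: "m (\<lambda>x. f (g \<otimes> x)) = m f" if g: "g \<in> carrier G" and f: "bounded_on (carrier G) f" for f g
  proof -
    obtain C where C: "\<And>x. x \<in> carrier G \<Longrightarrow> \<bar>f x\<bar> \<le> C"
      using f unfolding bounded_on_def by blast
    have fg: "bounded_on (carrier G) (\<lambda>x. f (g \<otimes> x))" using C g unfolding bounded_on_def by auto
    have "(\<lambda>j. avg (\<lambda>x. f (g \<otimes> x)) j - avg f j) \<longlonglongrightarrow> 0"
      by (rule Lim_null_comparison[OF always_eventually tendsto_mult_right_zero[OF Folner[OF g], of "2 * C"]])
        (use average_translate_diff_le[OF fin nonempty sub g C] in \<open>auto simp: avg_def\<close>)
    then have "((\<lambda>j. avg (\<lambda>x. f (g \<otimes> x)) j - avg f j) \<longlongrightarrow> 0) U" using U(2) by (rule tendsto_mono[rotated])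
    from tendsto_add[OF this avg_tendsto[OF f]]
    have "(avg (\<lambda>x. f (g \<otimes> x)) \<longlongrightarrow> m f) U" by simp
    then show ?thesis by (rule limit_unique[OF fg])
  qed
  show ?thesis
    unfolding amenable_def
  proof (rule exI[of _ m], intro conjI allI impI ballI)
    fix f g :: "'a \<Rightarrow> real" assume f: "bounded_on (carrier G) f" and g: "bounded_on (carrier G) g"
    have "avg (\<lambda>x. f x + g x) = (\<lambda>j. avg f j + avg g j)"
      unfolding avg_def by (auto simp: sum.distrib add_divide_distrib)
    then show "m (\<lambda>x. f x + g x) = m f + m g"
      using limit_unique[OF bounded_on_add[OF f g]] tendsto_add[OF avg_tendsto[OF f] avg_tendsto[OF g]]
      by simp
  next
    fix f :: "'a \<Rightarrow> real" and c assume f: "bounded_on (carrier G) f"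
    have "avg (\<lambda>x. c * f x) = (\<lambda>j. c * avg f j)"
      unfolding avg_def by (auto simp: sum_distrib_left)
    then show "m (\<lambda>x. c * f x) = c * m f"
      using limit_unique[OF bounded_on_scale[OF f]] tendsto_mult_left[OF avg_tendsto[OF f]] by simp
  next
    fix f :: "'a \<Rightarrow> real" assume f: "bounded_on (carrier G) f" and nonneg: "\<forall>x\<in>carrier G. 0 \<le> f x"
    have "avg f j \<ge> 0" for j
      using nonneg sub unfolding avg_def by (intro divide_nonneg_nonneg sum_nonneg) auto
    then show "0 \<le> m f" using tendsto_lowerbound[OF avg_tendsto[OF f] _ U(1)] by simp
  next
    have "avg (\<lambda>x. 1) = (\<lambda>j. 1)" using card_pos unfolding avg_def by auto
    moreover have "bounded_on (carrier G) (\<lambda>x. 1::real)" by (auto simp: bounded_on_def)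
    ultimately show "m (\<lambda>x. 1) = 1" using limit_unique by force
  qed (fact invariant)
qed

end

definition length_ball :: "('a, 'b) monoid_scheme \<Rightarrow> ('a \<Rightarrow> real) \<Rightarrow> real \<Rightarrow> 'a set" where
  "length_ball G L d = {x \<in> carrier G. L x \<le> d}"

definition poly_growth :: "('a, 'b) monoid_scheme \<Rightarrow> ('a \<Rightarrow> real) \<Rightarrow> bool" where
  "poly_growth G L \<longleftrightarrow> (\<exists>C k. k \<ge> 0 \<and> (\<forall>d \<ge> 0.
     finite (length_ball G L d) \<and> real (card (length_ball G L d)) \<le> C * (1 + d) powr k))"

lemma length_ball_mono: "d \<le> d' \<Longrightarrow> length_ball G L d \<subseteq> length_ball G L d'"
  unfolding length_ball_def by auto

lemma powr_not_bounded_by_poly: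
  fixes a C k :: real
  assumes "a > 1" "r > 0"
  obtains i :: nat where "a ^ i > C * (1 + r * real i) powr k"
proof -
  have "filterlim (\<lambda>i::nat. a ^ i / (1 + r * real i) powr k) at_top at_top"
    using assms by real_asymp
  then have "eventually (\<lambda>i. a ^ i / (1 + r * real i) powr k > C) sequentially"
    by (simp add: filterlim_at_top_dense)
  then obtain i where "a ^ i / (1 + r * real i) powr k > C"
    by (meson eventually_sequentially order_refl)
  moreover have "1 + r * real i > 0" using assms by (simp add: add_pos_nonneg)
  then have "(1 + r * real i) powr k > 0" by simp
  ultimately show ?thesis by (intro that[of i]) (simp add: less_divide_eq)
qed

context group
begin

lemma one_in_length_ball:
  "length_function G L \<Longrightarrow> d \<ge> 0 \<Longrightarrow> \<one> \<in> length_ball G L d"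
  unfolding length_ball_def length_function_def by auto

lemma mult_in_length_ball:
  assumes "length_function G L" "g \<in> carrier G" "x \<in> length_ball G L d"
  shows "g \<otimes> x \<in> length_ball G L (L g + d)"
proof -
  have "L (g \<otimes> x) \<le> L g + L x"
    using assms unfolding length_ball_def length_function_def by auto
  then show ?thesis using assms unfolding length_ball_def by auto
qed

lemma inv_in_length_ball:
  assumes "length_function G L" "x \<in> length_ball G L d"
  shows "inv x \<in> length_ball G L d"
  using assms unfolding length_ball_def length_function_def by auto

text \<open>Otherwise the balls would grow exponentially in the radius.\<close>

lemma almost_invariant_length_ball:
  assumes L: "length_function G L" and growth: "poly_growth G L" and r: "r > 0"
  obtains d where "d \<ge> 0"
    "real (card (length_ball G L (d + r))) \<le> (1 + 1 / r) * real (card (length_ball G L d))"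
proof -
  obtain C k where growth: "\<And>d. d \<ge> 0 \<Longrightarrow> finite (length_ball G L d) \<and>
      real (card (length_ball G L d)) \<le> C * (1 + d) powr k"
    using growth unfolding poly_growth_def by blast
  have "\<exists>d \<ge> 0. real (card (length_ball G L (d + r))) \<le> (1 + 1 / r) * real (card (length_ball G L d))"
  proof (rule ccontr)
    assume "\<not> ?thesis"
    then have expand: "(1 + 1 / r) * real (card (length_ball G L d)) < real (card (length_ball G L (d + r)))"
      if "d \<ge> 0" for d
      using that by (meson not_le)
    have expanding: "(1 + 1 / r) ^ i \<le> real (card (length_ball G L (r * real i)))" for i
    proof (induction i)
      case 0
      have "length_ball G L 0 \<noteq> {}" using one_in_length_ball[OF L] by blast
      then have "card (length_ball G L 0) \<ge> 1"
        using growth[of 0] by (simp add: Suc_le_eq card_gt_0_iff)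
      then show ?case by simp
    next
      case (Suc i)
      have "(1 + 1 / r) ^ Suc i \<le> (1 + 1 / r) * real (card (length_ball G L (r * real i)))"
        using Suc.IH r by (simp add: mult_left_mono)
      also have "\<dots> < real (card (length_ball G L (r * real i + r)))"
        using expand r by simp
      finally show ?case by (simp add: algebra_simps)
    qed
    obtain i where "(1 + 1 / r) ^ i > C * (1 + r * real i) powr k"
      using powr_not_bounded_by_poly[of "1 + 1 / r" r] r by auto
    moreover have "r * real i \<ge> 0" using r by simp
    ultimately show False using growth[of "r * real i"] expanding[of i] by linarith
  qed
  then show ?thesis using that by blast
qed

lemma card_translate_diff_length_ball_le:
  assumes L: "length_function G L" and g: "g \<in> carrier G" "L g \<le> r"
    and fin: "finite (length_ball G L (d + r))"
  shows "card ((\<lambda>x. g \<otimes> x) ` length_ball G L d - length_ball G L d)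
    \<le> card (length_ball G L (d + r)) - card (length_ball G L d)"
proof -
  let ?B = "length_ball G L d" and ?B' = "length_ball G L (d + r)"
  have "(\<lambda>x. g \<otimes> x) ` ?B \<subseteq> ?B'"
  proof (rule image_subsetI)
    fix x assume "x \<in> ?B"
    then have "g \<otimes> x \<in> length_ball G L (L g + d)" by (rule mult_in_length_ball[OF L g(1)])
    then show "g \<otimes> x \<in> ?B'" using length_ball_mono[of "L g + d" "d + r" G L] g(2) by auto
  qed
  moreover have "r \<ge> 0" using L g unfolding length_function_def by force
  then have "?B \<subseteq> ?B'" by (intro length_ball_mono) simp
  ultimately have "card ((\<lambda>x. g \<otimes> x) ` ?B - ?B) \<le> card (?B' - ?B)"
    using fin by (intro card_mono) auto
  also have "\<dots> = card ?B' - card ?B"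
    using fin \<open>?B \<subseteq> ?B'\<close> by (intro card_Diff_subset) (auto intro: finite_subset)
  finally show ?thesis .
qed

lemma translate_ratio_length_ball_le:
  assumes L: "length_function G L" and g: "g \<in> carrier G" "L g \<le> r" and r: "r > 0"
    and fin: "finite (length_ball G L (d + r))" and nonempty: "length_ball G L d \<noteq> {}"
    and almost: "real (card (length_ball G L (d + r))) \<le> (1 + 1 / r) * real (card (length_ball G L d))"
  shows "real (card ((\<lambda>x. g \<otimes> x) ` length_ball G L d - length_ball G L d)) / real (card (length_ball G L d))
    \<le> 1 / r"
proof -
  let ?B = "length_ball G L d" and ?B' = "length_ball G L (d + r)"
  have "card ?B \<le> card ?B'" using fin r by (intro card_mono length_ball_mono) auto
  then have "real (card ((\<lambda>x. g \<otimes> x) ` ?B - ?B)) \<le> real (card ?B') - real (card ?B)"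
    using card_translate_diff_length_ball_le[OF L g fin] by linarith
  also have "\<dots> \<le> real (card ?B) / r" using almost r by (simp add: ring_distribs)
  finally show ?thesis
    using fin nonempty r length_ball_mono[of d "d + r" G L]
    by (simp add: pos_divide_le_eq card_gt_0_iff finite_subset)
qed

lemma amenable_if_poly_growth:
  assumes L: "length_function G L" and growth: "poly_growth G L"
  shows "amenable G"
proof -
  have "\<exists>d. d \<ge> 0 \<and> real (card (length_ball G L (d + real (Suc j))))
      \<le> (1 + 1 / real (Suc j)) * real (card (length_ball G L d))" for j
    by (rule almost_invariant_length_ball[OF L growth, of "real (Suc j)"]) auto
  then obtain D where D0: "\<And>j. D j \<ge> 0" and D: "\<And>j. real (card (length_ball G L (D j + real (Suc j))))
      \<le> (1 + 1 / real (Suc j)) * real (card (length_ball G L (D j)))"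
    by metis
  define B where "B j = length_ball G L (D j)" for j
  have fin: "finite (length_ball G L d)" if "d \<ge> 0" for d
    using growth that unfolding poly_growth_def by blast
  have sub: "B j \<subseteq> carrier G" for j unfolding B_def length_ball_def by auto
  have nonempty: "B j \<noteq> {}" for j using one_in_length_ball[OF L D0] unfolding B_def by blast
  have finB: "finite (B j)" for j unfolding B_def using fin D0 .
  have Folner: "(\<lambda>j. real (card ((\<lambda>x. g \<otimes> x) ` B j - B j)) / real (card (B j))) \<longlonglongrightarrow> 0"
    if g: "g \<in> carrier G" for g
  proof -
    have "eventually (\<lambda>j. norm (real (card ((\<lambda>x. g \<otimes> x) ` B j - B j)) / real (card (B j)))
        \<le> 1 / real (Suc j)) sequentially"
    proof (rule eventually_sequentiallyI[of "nat \<lceil>L g\<rceil>"])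
      fix j assume "nat \<lceil>L g\<rceil> \<le> j"
      then have "L g \<le> real (Suc j)" by linarith
      moreover have "finite (length_ball G L (D j + real (Suc j)))" using fin D0 by (simp add: add_nonneg_nonneg)
      ultimately show "norm (real (card ((\<lambda>x. g \<otimes> x) ` B j - B j)) / real (card (B j))) \<le> 1 / real (Suc j)"
        using translate_ratio_length_ball_le[OF L g _ _ _ _ D] nonempty unfolding B_def by simp
    qed
    moreover have "(\<lambda>j. 1 / real (Suc j)) \<longlonglongrightarrow> 0" by real_asymp
    ultimately show ?thesis by (rule Lim_null_comparison)
  qed
  show ?thesis by (rule amenable_if_Folner_sequence[OF finB nonempty sub Folner])
qed

end

section \<open>Splitting the kernel of a bounded convolution operator\<close>

lemma lp_norm_nonneg: "lp_norm G q f \<ge> 0"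
  unfolding lp_norm_def by simp

lemma lp_norm_cong: "(\<And>x. x \<in> carrier G \<Longrightarrow> f x = g x) \<Longrightarrow> lp_norm G q f = lp_norm G q g"
  unfolding lp_norm_def by (metis (no_types, lifting) infsum_cong)

lemma lp_space_if_finite_support:
  assumes "finite {x \<in> carrier G. f x \<noteq> 0}"
  shows "f \<in> lp_space G q"
proof -
  have "{x \<in> carrier G. norm (f x) powr q \<noteq> 0} \<subseteq> {x \<in> carrier G. f x \<noteq> 0}" by auto
  then show ?thesis
    using assms finite_subset unfolding lp_space_def by (blast intro: finite_nonzero_values_imp_summable_on)
qed

lemma norm_le_lp_norm:
  assumes f: "f \<in> lp_space G q" and q: "q > 0" and x: "x \<in> carrier G"
  shows "norm (f x) \<le> lp_norm G q f"
proof -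
  have "norm (f x) powr q \<le> infsum (\<lambda>x. norm (f x) powr q) (carrier G)"
    using finite_sum_le_infsum[of "\<lambda>x. norm (f x) powr q" "carrier G" "{x}"] f x
    unfolding lp_space_def by simp
  then have "(norm (f x) powr q) powr (1 / q) \<le> lp_norm G q f"
    unfolding lp_norm_def using q by (intro powr_mono2) auto
  then show ?thesis using q by (simp add: powr_powr)
qed

lemma lp_norm_indicator:
  assumes "finite S" "S \<subseteq> carrier G" "q > 0"
  shows "lp_norm G q (indicator S :: 'a \<Rightarrow> complex) = real (card S) powr (1 / q)"
proof -
  have "infsum (\<lambda>x. norm (indicator S x :: complex) powr q) (carrier G) = infsum (\<lambda>x. 1::real) S"
    by (rule infsum_cong_neutral) (use assms in \<open>auto simp: indicator_def\<close>)
  then show ?thesis using assms(1) unfolding lp_norm_def by simp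
qed

lemma conv_indicator:
  assumes "F \<subseteq> carrier G"
  shows "conv G (indicator F) f x = (\<Sum>y\<in>F. f (inv\<^bsub>G\<^esub> y \<otimes>\<^bsub>G\<^esub> x))"
proof -
  have "{y \<in> carrier G. (indicator F y :: complex) \<noteq> 0} = F" using assms by (auto simp: indicator_def)
  then show ?thesis unfolding conv_def by simp
qed

text \<open>\<open>word_count G F n w\<close> is the number of ways to write \<open>w\<close> as a product of
  \<open>n\<close> elements of \<open>F\<close>, i.e. the \<open>n\<close>-th convolution power of the indicator of \<open>F\<close>.\<close>

primrec word_count :: "('a, 'b) monoid_scheme \<Rightarrow> 'a set \<Rightarrow> nat \<Rightarrow> 'a \<Rightarrow> real" where
  "word_count G F 0 = (\<lambda>w. if w = \<one>\<^bsub>G\<^esub> then 1 else 0)"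
| "word_count G F (Suc n) = (\<lambda>w. \<Sum>y\<in>F. word_count G F n (inv\<^bsub>G\<^esub> y \<otimes>\<^bsub>G\<^esub> w))"

lemma word_count_nonneg: "word_count G F n w \<ge> 0"
  by (induction n arbitrary: w) (auto intro: sum_nonneg)

definition row_sums_le :: "('a, 'b) monoid_scheme \<Rightarrow> ('a \<Rightarrow> 'a \<Rightarrow> real) \<Rightarrow> real \<Rightarrow> bool" where
  "row_sums_le G k C \<longleftrightarrow> (\<forall>x\<in>carrier G. \<forall>Y. finite Y \<longrightarrow> Y \<subseteq> carrier G \<longrightarrow> sum (k x) Y \<le> C)"

context group
begin

lemma finite_support_word_count:
  assumes "finite F" "F \<subseteq> carrier G"
  shows "finite {w \<in> carrier G. word_count G F n w \<noteq> 0}"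
proof (induction n)
  case 0
  have "{w \<in> carrier G. word_count G F 0 w \<noteq> 0} \<subseteq> {\<one>}" by auto
  then show ?case using finite_subset by blast
next
  case (Suc n)
  let ?S = "{w \<in> carrier G. word_count G F n w \<noteq> 0}"
  have "{w \<in> carrier G. word_count G F (Suc n) w \<noteq> 0} \<subseteq> (\<lambda>(y, v). y \<otimes> v) ` (F \<times> ?S)"
  proof
    fix w assume w: "w \<in> {w \<in> carrier G. word_count G F (Suc n) w \<noteq> 0}"
    then obtain y where y: "y \<in> F" "word_count G F n (inv y \<otimes> w) \<noteq> 0"
      by (auto elim: sum.not_neutral_contains_not_neutral)
    then have "y \<in> carrier G" using assms by auto
    then have "w = y \<otimes> (inv y \<otimes> w)" "inv y \<otimes> w \<in> ?S" using y w by (auto simp: m_assoc[symmetric])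
    then show "w \<in> (\<lambda>(y, v). y \<otimes> v) ` (F \<times> ?S)" using y by force
  qed
  moreover have "finite ((\<lambda>(y, v). y \<otimes> v) ` (F \<times> ?S))" using assms Suc by auto
  ultimately show ?case using finite_subset by blast
qed

text \<open>\<open>\<rho>\<^sup>n\<close> bounds the \<open>\<ell>\<^sup>p\<close> norm of the \<open>n\<close>-th convolution power, which dominates its values.\<close>

lemma word_count_le_power:
  assumes F: "finite F" "F \<subseteq> carrier G" and p: "p > 0" and \<rho>: "\<rho> \<ge> 0"
    and bound: "\<And>f. f \<in> lp_space G p \<Longrightarrow> lp_norm G p (conv G (indicator F) f) \<le> \<rho> * lp_norm G p f"
    and w: "w \<in> carrier G"
  shows "word_count G F n w \<le> \<rho> ^ n"
proof -
  let ?c = "\<lambda>n w. complex_of_real (word_count G F n w)"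
  have lp: "?c n \<in> lp_space G p" for n
    by (rule lp_space_if_finite_support) (use finite_support_word_count[OF F, of n] in simp)
  have "lp_norm G p (?c n) \<le> \<rho> ^ n"
  proof (induction n)
    case 0
    have "lp_norm G p (?c 0) = lp_norm G p (indicator {\<one>})"
      by (rule lp_norm_cong) (simp add: indicator_def)
    then show ?case using p by (simp add: lp_norm_indicator)
  next
    case (Suc n)
    have "lp_norm G p (?c (Suc n)) = lp_norm G p (conv G (indicator F) (?c n))"
      by (rule lp_norm_cong) (simp add: conv_indicator[OF F(2)])
    also have "\<dots> \<le> \<rho> * lp_norm G p (?c n)" by (rule bound[OF lp])
    also have "\<dots> \<le> \<rho> * \<rho> ^ n" using Suc.IH \<rho> by (rule mult_left_mono)
    finally show ?case by simp
  qed
  then show ?thesis using norm_le_lp_norm[OF lp p w, of n] by simp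
qed

text \<open>The resolvent \<open>\<psi> = \<Sum>\<^sub>n K\<^sup>-\<^sup>n word_count n\<close> converges for \<open>K > \<rho>\<close> and satisfies
  \<open>\<Sum>\<^sub>y\<^sub>\<in>\<^sub>F \<psi>(y\<inverse>w) = K (\<psi> w - \<delta>\<^sub>1 w)\<close>.\<close>

lemma exists_superharmonic_weight:
  assumes F: "finite F" "F \<subseteq> carrier G" and \<rho>: "\<rho> \<ge> 0" "\<rho> < K"
    and count: "\<And>n w. w \<in> carrier G \<Longrightarrow> word_count G F n w \<le> \<rho> ^ n"
  obtains \<psi> where "\<psi> \<one> \<ge> 1" "\<And>w. w \<in> carrier G \<Longrightarrow> \<psi> w \<ge> 0"
    "\<And>w. w \<in> carrier G \<Longrightarrow> (\<Sum>y\<in>F. \<psi> (inv y \<otimes> w)) \<le> K * \<psi> w"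
proof
  have K: "K > 0" using \<rho> by simp
  define \<psi> where "\<psi> w = (\<Sum>n. word_count G F n w / K ^ n)" for w
  have summable: "summable (\<lambda>n. word_count G F n w / K ^ n)" if "w \<in> carrier G" for w
  proof (rule summable_comparison_test'[OF summable_geometric[of "\<rho> / K"]])
    show "norm (\<rho> / K) < 1" using \<rho> by simp
    show "norm (word_count G F n w / K ^ n) \<le> (\<rho> / K) ^ n" for n
      using count[OF that, of n] word_count_nonneg[of G F n w] K
      by (simp add: power_divide divide_right_mono)
  qed
  have tail_summable: "summable (\<lambda>n. word_count G F (Suc n) w / K ^ Suc n)" if "w \<in> carrier G" for w
    using summable[OF that] by (subst summable_Suc_iff)
  have split: "\<psi> w = word_count G F 0 w + (\<Sum>n. word_count G F (Suc n) w / K ^ Suc n)"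
    if "w \<in> carrier G" for w
    using suminf_split_head[OF summable[OF that]] unfolding \<psi>_def by simp
  have tail_nonneg: "(\<Sum>n. word_count G F (Suc n) w / K ^ Suc n) \<ge> 0" if "w \<in> carrier G" for w
    using K by (intro suminf_nonneg tail_summable[OF that] divide_nonneg_nonneg word_count_nonneg) auto
  show "\<psi> \<one> \<ge> 1" using split[of \<one>] tail_nonneg[of \<one>] by simp
  show "\<psi> w \<ge> 0" if "w \<in> carrier G" for w
    using split[OF that] tail_nonneg[OF that] word_count_nonneg[of G F 0 w] by linarith
  show "(\<Sum>y\<in>F. \<psi> (inv y \<otimes> w)) \<le> K * \<psi> w" if w: "w \<in> carrier G" for w
  proof -
    have "(\<Sum>y\<in>F. \<psi> (inv y \<otimes> w)) = (\<Sum>n. \<Sum>y\<in>F. word_count G F n (inv y \<otimes> w) / K ^ n)"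
      unfolding \<psi>_def by (rule suminf_sum[symmetric]) (use F w in \<open>auto intro: summable\<close>)
    also have "\<dots> = (\<Sum>n. K * (word_count G F (Suc n) w / K ^ Suc n))"
      using K by (simp add: sum_divide_distrib[symmetric])
    also have "\<dots> = K * (\<psi> w - word_count G F 0 w)"
      using suminf_mult[OF tail_summable[OF w], of K] split[OF w] by simp
    also have "\<dots> \<le> K * \<psi> w" using K word_count_nonneg[of G F 0 w] by (simp add: mult_left_mono)
    finally show ?thesis .
  qed
qed

lemma superharmonic_pos_translate_iff:
  fixes \<psi> :: "'a \<Rightarrow> real"
  assumes F: "finite F" "F \<subseteq> carrier G" "\<And>z. z \<in> F \<Longrightarrow> inv z \<in> F" and K: "K > 0"
    and \<psi>: "\<And>w. w \<in> carrier G \<Longrightarrow> \<psi> w \<ge> 0"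
      "\<And>w. w \<in> carrier G \<Longrightarrow> (\<Sum>y\<in>F. \<psi> (inv y \<otimes> w)) \<le> K * \<psi> w"
    and z: "z \<in> F" and u: "u \<in> carrier G"
  shows "\<psi> (inv z \<otimes> u) > 0 \<longleftrightarrow> \<psi> u > 0"
proof -
  have single: "\<psi> (inv y \<otimes> w) \<le> K * \<psi> w" if "y \<in> F" "w \<in> carrier G" for y w
  proof -
    have "\<psi> (inv y \<otimes> w) \<le> (\<Sum>y\<in>F. \<psi> (inv y \<otimes> w))"
      using F that by (intro member_le_sum \<psi>(1)) auto
    then show ?thesis using \<psi>(2)[OF that(2)] by linarith
  qed
  have zc: "z \<in> carrier G" using z F by auto
  have "\<psi> u \<le> K * \<psi> (inv z \<otimes> u)"
    using single[of "inv z" "inv z \<otimes> u"] F(3)[OF z] zc u by (simp add: m_assoc[symmetric])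
  moreover have "\<psi> (inv z \<otimes> u) \<le> K * \<psi> u" by (rule single[OF z u])
  ultimately show ?thesis using K by (auto simp: zero_less_mult_iff dest: order.strict_trans2)
qed

text \<open>Translating \<open>\<psi>\<close> inside each left coset of the subgroup generated by \<open>F\<close> makes it
  positive everywhere.\<close>

lemma exists_positive_weight:
  fixes \<psi> :: "'a \<Rightarrow> real"
  assumes F: "finite F" "F \<subseteq> carrier G" "\<And>z. z \<in> F \<Longrightarrow> inv z \<in> F" and K: "K > 0"
    and \<psi>: "\<psi> \<one> > 0" "\<And>w. w \<in> carrier G \<Longrightarrow> \<psi> w \<ge> 0"
      "\<And>w. w \<in> carrier G \<Longrightarrow> (\<Sum>y\<in>F. \<psi> (inv y \<otimes> w)) \<le> K * \<psi> w"
  obtains \<phi> where "\<And>x. x \<in> carrier G \<Longrightarrow> \<phi> x > 0"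
    "\<And>x. x \<in> carrier G \<Longrightarrow> (\<Sum>z\<in>F. \<phi> (x \<otimes> z)) \<le> K * \<phi> x"
proof
  define H where "H = {w \<in> carrier G. \<psi> w > 0}"
  have H_stable: "inv z \<otimes> u \<in> H \<longleftrightarrow> u \<in> H" if z: "z \<in> F" and u: "u \<in> carrier G" for z u
    using superharmonic_pos_translate_iff[OF F K \<psi>(2,3) z u] z u F(2) unfolding H_def by auto
  define rep where "rep x = (SOME r. r \<in> carrier G \<and> inv x \<otimes> r \<in> H)" for x
  have rep: "rep x \<in> carrier G \<and> inv x \<otimes> rep x \<in> H" if x: "x \<in> carrier G" for x
    unfolding rep_def by (rule someI[of _ x]) (use x \<psi>(1) in \<open>simp add: H_def\<close>)
  have rep_mult: "rep (x \<otimes> z) = rep x" if x: "x \<in> carrier G" and z: "z \<in> F" for x z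
  proof -
    have "inv (x \<otimes> z) \<otimes> r \<in> H \<longleftrightarrow> inv x \<otimes> r \<in> H" if "r \<in> carrier G" for r
      using H_stable[OF z, of "inv x \<otimes> r"] x z F(2) that by (auto simp: inv_mult_group m_assoc)
    then have "(\<lambda>r. r \<in> carrier G \<and> inv (x \<otimes> z) \<otimes> r \<in> H) = (\<lambda>r. r \<in> carrier G \<and> inv x \<otimes> r \<in> H)"
      by blast
    then show ?thesis unfolding rep_def by simp
  qed
  define \<phi> where "\<phi> x = \<psi> (inv x \<otimes> rep x)" for x
  show "\<phi> x > 0" if "x \<in> carrier G" for x using rep[OF that] unfolding \<phi>_def H_def by simp
  show "(\<Sum>z\<in>F. \<phi> (x \<otimes> z)) \<le> K * \<phi> x" if x: "x \<in> carrier G" for x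
  proof -
    have "(\<Sum>z\<in>F. \<phi> (x \<otimes> z)) = (\<Sum>z\<in>F. \<psi> (inv z \<otimes> (inv x \<otimes> rep x)))"
    proof (rule sum.cong)
      fix z assume z: "z \<in> F"
      then have "inv (x \<otimes> z) \<otimes> rep x = inv z \<otimes> (inv x \<otimes> rep x)"
        using x F(2) rep[OF x] by (auto simp: inv_mult_group m_assoc)
      then show "\<phi> (x \<otimes> z) = \<psi> (inv z \<otimes> (inv x \<otimes> rep x))"
        unfolding \<phi>_def using rep_mult[OF x z] by simp
    qed simp
    also have "\<dots> \<le> K * \<phi> x" unfolding \<phi>_def using rep[OF x] x by (intro \<psi>(3)) auto
    finally show ?thesis .
  qed
qed

lemma sum_le_sum_translate:
  fixes h :: "'a \<Rightarrow> real"
  assumes Y: "finite Y" "Y \<subseteq> carrier G" and F: "finite F" "F \<subseteq> carrier G" and x: "x \<in> carrier G"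
    and nonneg: "\<And>y. y \<in> carrier G \<Longrightarrow> h y \<ge> 0" and supp: "\<And>y. inv x \<otimes> y \<notin> F \<Longrightarrow> h y = 0"
  shows "sum h Y \<le> (\<Sum>z\<in>F. h (x \<otimes> z))"
proof -
  have "sum h Y = sum h (Y \<inter> (\<lambda>z. x \<otimes> z) ` F)"
  proof (rule sum.mono_neutral_right[OF Y(1)])
    show "\<forall>y\<in>Y - Y \<inter> (\<lambda>z. x \<otimes> z) ` F. h y = 0"
    proof
      fix y assume y: "y \<in> Y - Y \<inter> (\<lambda>z. x \<otimes> z) ` F"
      then have "y = x \<otimes> (inv x \<otimes> y)" using x Y by (auto simp: m_assoc[symmetric])
      then show "h y = 0" using y by (intro supp) blast
    qed
  qed auto
  also have "\<dots> \<le> sum h ((\<lambda>z. x \<otimes> z) ` F)"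
    using F x nonneg by (intro sum_mono2) auto
  also have "\<dots> = (\<Sum>z\<in>F. h (x \<otimes> z))"
    using inj_on_subset[OF inj_on_cmult[OF x] F(2)] by (simp add: sum.reindex)
  finally show ?thesis .
qed

text \<open>Schur's test in reverse: splitting each edge \<open>{x, y}\<close> of the Cayley graph in the ratio
  \<open>\<phi> y : \<phi> x\<close> bounds every row sum by \<open>K\<close>.\<close>

lemma indicator_kernel_split_if_weight:
  fixes \<phi> :: "'a \<Rightarrow> real"
  assumes F: "finite F" "F \<subseteq> carrier G" "\<And>z. z \<in> F \<Longrightarrow> inv z \<in> F"
    and \<phi>: "\<And>x. x \<in> carrier G \<Longrightarrow> \<phi> x > 0"
      "\<And>x. x \<in> carrier G \<Longrightarrow> (\<Sum>z\<in>F. \<phi> (x \<otimes> z)) \<le> K * \<phi> x"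
  obtains g :: "'a \<Rightarrow> 'a \<Rightarrow> real"
  where "\<And>x y. x \<in> carrier G \<Longrightarrow> y \<in> carrier G \<Longrightarrow> g x y \<ge> 0"
    "\<And>x y. x \<in> carrier G \<Longrightarrow> y \<in> carrier G \<Longrightarrow> g x y + g y x = indicator F (inv x \<otimes> y)"
    "row_sums_le G g K"
proof -
  define g where "g x y = indicator F (inv x \<otimes> y) * (\<phi> y / (\<phi> x + \<phi> y))" for x y
  have inv_mem: "inv y \<otimes> x \<in> F \<longleftrightarrow> inv x \<otimes> y \<in> F" if "x \<in> carrier G" "y \<in> carrier G" for x y
    using F(3)[of "inv x \<otimes> y"] F(3)[of "inv y \<otimes> x"] that by (auto simp: inv_mult_group)
  have "g x y \<ge> 0" if "x \<in> carrier G" "y \<in> carrier G" for x y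
    using \<phi>(1) that unfolding g_def by (simp add: add_pos_pos less_imp_le)
  moreover have "g x y + g y x = indicator F (inv x \<otimes> y)" if "x \<in> carrier G" "y \<in> carrier G" for x y
    using \<phi>(1)[of x] \<phi>(1)[of y] that inv_mem[OF that]
    by (auto simp: g_def indicator_def add_divide_distrib[symmetric] add.commute add_pos_pos)
  moreover have "row_sums_le G g K"
    unfolding row_sums_le_def
  proof (intro ballI allI impI)
    fix x Y assume x: "x \<in> carrier G" and Y: "finite Y" "Y \<subseteq> carrier G"
    define h where "h y = indicator F (inv x \<otimes> y) * (\<phi> y / \<phi> x)" for y
    have "sum (g x) Y \<le> sum h Y"
    proof (rule sum_mono)
      fix y assume "y \<in> Y"
      then have "\<phi> y > 0" "\<phi> x > 0" using Y x \<phi>(1) by auto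
      then show "g x y \<le> h y" by (simp add: g_def h_def indicator_def frac_le)
    qed
    also have "\<dots> \<le> (\<Sum>z\<in>F. h (x \<otimes> z))"
      using Y F(1,2) x \<phi>(1) by (intro sum_le_sum_translate) (auto simp: h_def less_imp_le)
    also have "\<dots> = (\<Sum>z\<in>F. \<phi> (x \<otimes> z)) / \<phi> x"
      unfolding sum_divide_distrib using F(2) x
      by (intro sum.cong) (auto simp: h_def m_assoc[symmetric])
    also have "\<dots> \<le> K" using \<phi>[OF x] by (simp add: divide_le_eq)
    finally show "sum (g x) Y \<le> K" .
  qed
  ultimately show ?thesis by (rule that)
qed

lemma indicator_kernel_split:
  assumes F: "finite F" "F \<subseteq> carrier G" "\<And>z. z \<in> F \<Longrightarrow> inv z \<in> F" and p: "p > 0" and \<rho>: "\<rho> \<ge> 0"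
    and bound: "\<And>f. f \<in> lp_space G p \<Longrightarrow> lp_norm G p (conv G (indicator F) f) \<le> \<rho> * lp_norm G p f"
  obtains g :: "'a \<Rightarrow> 'a \<Rightarrow> real"
  where "\<And>x y. x \<in> carrier G \<Longrightarrow> y \<in> carrier G \<Longrightarrow> g x y \<ge> 0"
    "\<And>x y. x \<in> carrier G \<Longrightarrow> y \<in> carrier G \<Longrightarrow> g x y + g y x = indicator F (inv x \<otimes> y)"
    "row_sums_le G g (2 * \<rho> + 1)"
proof -
  obtain \<psi> where \<psi>: "\<psi> \<one> \<ge> 1" "\<And>w. w \<in> carrier G \<Longrightarrow> \<psi> w \<ge> 0"
      "\<And>w. w \<in> carrier G \<Longrightarrow> (\<Sum>y\<in>F. \<psi> (inv y \<otimes> w)) \<le> (2 * \<rho> + 1) * \<psi> w"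
    using exists_superharmonic_weight[OF F(1,2) \<rho>, of "2 * \<rho> + 1"]
      word_count_le_power[OF F(1,2) p \<rho> bound] \<rho> by auto
  obtain \<phi> where "\<And>x. x \<in> carrier G \<Longrightarrow> \<phi> x > 0"
      "\<And>x. x \<in> carrier G \<Longrightarrow> (\<Sum>z\<in>F. \<phi> (x \<otimes> z)) \<le> (2 * \<rho> + 1) * \<phi> x"
    using exists_positive_weight[OF F, of "2 * \<rho> + 1" \<psi>] \<psi> \<rho> by auto
  then show ?thesis using indicator_kernel_split_if_weight[OF F] that by blast
qed

end

lemma summable_on_infsum_le_if_sums_le:
  fixes g :: "'a \<Rightarrow> real"
  assumes nonneg: "\<And>x. x \<in> A \<Longrightarrow> 0 \<le> g x" and bound: "\<And>Y. finite Y \<Longrightarrow> Y \<subseteq> A \<Longrightarrow> sum g Y \<le> C"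
  shows "g summable_on A \<and> infsum g A \<le> C"
proof -
  have "bdd_above (sum g ` {F. F \<subseteq> A \<and> finite F})" using bound by (auto intro!: bdd_aboveI)
  then have "g summable_on A" using nonneg by (rule nonneg_bdd_above_summable_on[rotated])
  moreover have "infsum g A \<le> C" using calculation bound by (rule infsum_le_finite_sums)
  ultimately show ?thesis by blast
qed

definition block_index :: "(nat \<Rightarrow> 'a set) \<Rightarrow> 'a \<Rightarrow> nat" where
  "block_index A x = (THE n. x \<in> A n)"

lemma block_index_eq: "disjoint_family A \<Longrightarrow> x \<in> A n \<Longrightarrow> block_index A x = n"
  unfolding block_index_def disjoint_family_on_def by (rule the_equality) auto

context group
begin

lemma row_sums_le_nonneg: "row_sums_le G k C \<Longrightarrow> C \<ge> 0"
  unfolding row_sums_le_def by (metis empty_subsetI finite.emptyI one_closed sum.empty)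

lemma T1_if_symmetric_split:
  fixes f :: "'a \<Rightarrow> complex" and h :: "'a \<Rightarrow> 'a \<Rightarrow> real"
  assumes split: "\<And>x y. x \<in> carrier G \<Longrightarrow> y \<in> carrier G \<Longrightarrow> f (inv x \<otimes> y) = of_real (h x y + h y x)"
    and nonneg: "\<And>x y. x \<in> carrier G \<Longrightarrow> y \<in> carrier G \<Longrightarrow> h x y \<ge> 0"
    and rows: "row_sums_le G h C"
  shows "f \<in> T1 G"
proof -
  have row: "(\<lambda>y. norm (complex_of_real (h x y))) summable_on carrier G \<and>
      infsum (\<lambda>y. norm (complex_of_real (h x y))) (carrier G) \<le> C" if x: "x \<in> carrier G" for x
  proof (rule summable_on_infsum_le_if_sums_le)
    fix Y assume "finite Y" "Y \<subseteq> carrier G"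
    moreover from this have "sum (\<lambda>y. norm (complex_of_real (h x y))) Y = sum (h x) Y"
      using nonneg[OF x] by (intro sum.cong) auto
    ultimately show "sum (\<lambda>y. norm (complex_of_real (h x y))) Y \<le> C"
      using rows x unfolding row_sums_le_def by simp
  qed simp
  show ?thesis
    unfolding T1_def mem_Collect_eq
  proof (intro exI conjI)
    show "\<forall>x\<in>carrier G. \<forall>y\<in>carrier G.
        f (inv x \<otimes> y) = complex_of_real (h x y) + complex_of_real (h y x)"
      using split by simp
  qed (use row in blast)+
qed

lemma row_sums_le_select:
  fixes g :: "nat \<Rightarrow> 'a \<Rightarrow> 'a \<Rightarrow> real" and \<sigma> :: "'a \<Rightarrow> 'a \<Rightarrow> nat"
  assumes rows: "\<And>n. row_sums_le G (g n) (K n)"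
    and nonneg: "\<And>n x y. x \<in> carrier G \<Longrightarrow> y \<in> carrier G \<Longrightarrow> g n x y \<ge> 0"
    and c: "\<And>n. c n \<ge> 0" and summable: "summable (\<lambda>n. c n * K n)"
  shows "row_sums_le G (\<lambda>x y. c (\<sigma> x y) * g (\<sigma> x y) x y) (\<Sum>n. c n * K n)"
  unfolding row_sums_le_def
proof (intro ballI allI impI)
  fix x Y assume x: "x \<in> carrier G" and Y: "finite Y" "Y \<subseteq> carrier G"
  have "(\<Sum>y\<in>Y. c (\<sigma> x y) * g (\<sigma> x y) x y)
      = (\<Sum>n\<in>\<sigma> x ` Y. \<Sum>y\<in>{y \<in> Y. \<sigma> x y = n}. c (\<sigma> x y) * g (\<sigma> x y) x y)"
    by (rule sum.group[symmetric]) (use Y in auto)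
  also have "\<dots> = (\<Sum>n\<in>\<sigma> x ` Y. c n * sum (g n x) {y \<in> Y. \<sigma> x y = n})"
    by (auto simp: sum_distrib_left intro!: sum.cong)
  also have "\<dots> \<le> (\<Sum>n\<in>\<sigma> x ` Y. c n * K n)"
  proof (intro sum_mono mult_left_mono c)
    fix n
    have "{y \<in> Y. \<sigma> x y = n} \<subseteq> carrier G" using Y by auto
    then show "sum (g n x) {y \<in> Y. \<sigma> x y = n} \<le> K n"
      using rows[of n] x Y(1) unfolding row_sums_le_def by simp
  qed
  also have "\<dots> \<le> (\<Sum>n. c n * K n)"
    using Y(1) summable c row_sums_le_nonneg[OF rows] by (intro sum_le_suminf) auto
  finally show "(\<Sum>y\<in>Y. c (\<sigma> x y) * g (\<sigma> x y) x y) \<le> (\<Sum>n. c n * K n)" .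
qed

text \<open>The function below is \<open>\<Sum>\<^sub>n c\<^sub>n 1\<^bsub>F\<^sub>n\<^esub>\<close>; the sum is pointwise finite as the \<open>F\<^sub>n\<close> are disjoint.\<close>

lemma block_function_in_T1:
  fixes Fs :: "nat \<Rightarrow> 'a set" and g :: "nat \<Rightarrow> 'a \<Rightarrow> 'a \<Rightarrow> real"
  assumes disjoint: "disjoint_family Fs" and Fs: "\<And>n. Fs n \<subseteq> carrier G" "\<And>n z. z \<in> Fs n \<Longrightarrow> inv z \<in> Fs n"
    and g: "\<And>n x y. x \<in> carrier G \<Longrightarrow> y \<in> carrier G \<Longrightarrow> g n x y \<ge> 0"
      "\<And>n x y. x \<in> carrier G \<Longrightarrow> y \<in> carrier G \<Longrightarrow> g n x y + g n y x = indicator (Fs n) (inv x \<otimes> y)"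
      "\<And>n. row_sums_le G (g n) (K n)"
    and c: "\<And>n. c n \<ge> 0" and summable: "summable (\<lambda>n. c n * K n)"
  shows "(\<lambda>w. if \<exists>n. w \<in> Fs n then complex_of_real (c (block_index Fs w)) else 0) \<in> T1 G"
proof (rule T1_if_symmetric_split)
  let ?\<sigma> = "\<lambda>x y. block_index Fs (inv x \<otimes> y)"
  show "row_sums_le G (\<lambda>x y. c (?\<sigma> x y) * g (?\<sigma> x y) x y) (\<Sum>n. c n * K n)"
    by (rule row_sums_le_select[OF g(3,1) c summable])
  fix x y assume x: "x \<in> carrier G" and y: "y \<in> carrier G"
  show "0 \<le> c (?\<sigma> x y) * g (?\<sigma> x y) x y" using c g(1)[OF x y] by simp
  have inv_eq: "inv y \<otimes> x = inv (inv x \<otimes> y)" using x y by (simp add: inv_mult_group)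
  have g_zero: "g n x y = 0 \<and> g n y x = 0" if "inv x \<otimes> y \<notin> Fs n" for n
    using g(1)[OF x y, of n] g(1)[OF y x, of n] g(2)[OF x y, of n] that by simp
  show "(if \<exists>n. inv x \<otimes> y \<in> Fs n then complex_of_real (c (block_index Fs (inv x \<otimes> y))) else 0)
      = complex_of_real (c (?\<sigma> x y) * g (?\<sigma> x y) x y + c (?\<sigma> y x) * g (?\<sigma> y x) y x)"
  proof (cases "\<exists>n. inv x \<otimes> y \<in> Fs n")
    case True
    then obtain n where n: "inv x \<otimes> y \<in> Fs n" by blast
    then have "inv y \<otimes> x \<in> Fs n" using Fs(2) inv_eq by simp
    then have "?\<sigma> x y = n" "?\<sigma> y x = n" using block_index_eq[OF disjoint] n by auto
    then show ?thesis using g(2)[OF x y, of n] n True by (simp add: distrib_left[symmetric])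
  next
    case False
    then have "inv y \<otimes> x \<notin> Fs n" for n using Fs(2) inv_eq x y by (metis inv_inv m_closed inv_closed)
    then show ?thesis using False g_zero g(1)[OF y x] g(2)[OF y x] by simp
  qed
qed

end

lemma block_function_not_in_lp:
  fixes Fs :: "nat \<Rightarrow> 'a set" and c :: "nat \<Rightarrow> real"
  assumes disjoint: "disjoint_family Fs" and Fs: "\<And>n. finite (Fs n)" "\<And>n. Fs n \<subseteq> carrier G"
    and c: "\<And>n. c n \<ge> 0" and large: "\<And>n. real (card (Fs n)) * c n powr q \<ge> 1"
  shows "(\<lambda>w. if \<exists>n. w \<in> Fs n then complex_of_real (c (block_index Fs w)) else 0) \<notin> lp_space G q"
proof
  let ?f = "\<lambda>w. if \<exists>n. w \<in> Fs n then complex_of_real (c (block_index Fs w)) else 0"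
  let ?g = "\<lambda>x. norm (?f x) powr q"
  assume "?f \<in> lp_space G q"
  then have summable: "?g summable_on carrier G" unfolding lp_space_def by simp
  have block: "sum ?g (Fs n) = real (card (Fs n)) * c n powr q" for n
    using block_index_eq[OF disjoint] c by (subst sum.cong[OF refl, of _ _ "\<lambda>_. c n powr q"]) auto
  have "real n \<le> sum ?g (\<Union>m<n. Fs m)" for n
  proof -
    have "real n \<le> (\<Sum>m<n. real (card (Fs m)) * c m powr q)"
      using sum_mono[of "{..<n}" "\<lambda>_. 1" "\<lambda>m. real (card (Fs m)) * c m powr q"] large by simp
    also have "\<dots> = (\<Sum>m<n. sum ?g (Fs m))" using block by simp
    also have "\<dots> = sum ?g (\<Union>m<n. Fs m)"
      using disjoint Fs(1) by (intro sum.UNION_disjoint_family[symmetric]) (auto simp: disjoint_family_on_def)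
    finally show ?thesis .
  qed
  moreover have "sum ?g (\<Union>m<n. Fs m) \<le> infsum ?g (carrier G)" for n
    using summable Fs by (intro finite_sum_le_infsum) auto
  moreover obtain n :: nat where "real n > infsum ?g (carrier G)" using reals_Archimedean2 by blast
  ultimately show False by (meson not_le order_trans)
qed

section \<open>Groups of super-polynomial growth with property RD\<close>

definition RD_inequality :: "('a, 'b) monoid_scheme \<Rightarrow> real \<Rightarrow> ('a \<Rightarrow> real) \<Rightarrow> real poly \<Rightarrow> bool" where
  "RD_inequality G p L P \<longleftrightarrow> (\<forall>d \<ge> 0. \<forall>a \<in> group_algebra G.
     (\<forall>x\<in>carrier G. a x \<noteq> 0 \<longrightarrow> L x \<le> d) \<longrightarrow>
     (\<forall>f \<in> lp_space G p. lp_norm G p (conv G a f) \<le> poly P d * lp_norm G p a * lp_norm G p f))"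

lemma property_RD_iff: "property_RD G p \<longleftrightarrow> (\<exists>L P. length_function G L \<and> RD_inequality G p L P)"
  unfolding property_RD_def RD_inequality_def by blast

lemma poly_abs_le_power_bound:
  fixes P :: "real poly"
  obtains A m where "A \<ge> 1" "\<And>d. d \<ge> 0 \<Longrightarrow> \<bar>poly P d\<bar> + 1 \<le> A * (1 + d) ^ m"
proof
  define S where "S = (\<Sum>i\<le>degree P. \<bar>coeff P i\<bar>)"
  show "S + 1 \<ge> 1" unfolding S_def by (simp add: sum_nonneg)
  show "\<bar>poly P d\<bar> + 1 \<le> (S + 1) * (1 + d) ^ degree P" if d: "d \<ge> 0" for d
  proof -
    have "\<bar>poly P d\<bar> \<le> (\<Sum>i\<le>degree P. \<bar>coeff P i * d ^ i\<bar>)" unfolding poly_altdef by (rule sum_abs)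
    also have "\<dots> \<le> (\<Sum>i\<le>degree P. \<bar>coeff P i\<bar> * (1 + d) ^ degree P)"
    proof (rule sum_mono)
      fix i assume i: "i \<in> {..degree P}"
      have "d ^ i \<le> (1 + d) ^ i" using d by (intro power_mono) auto
      also have "\<dots> \<le> (1 + d) ^ degree P" using d i by (intro power_increasing) auto
      finally have "d ^ i \<le> (1 + d) ^ degree P" .
      then show "\<bar>coeff P i * d ^ i\<bar> \<le> \<bar>coeff P i\<bar> * (1 + d) ^ degree P"
        using d by (simp add: abs_mult mult_left_mono)
    qed
    also have "\<dots> = S * (1 + d) ^ degree P" unfolding S_def by (simp add: sum_distrib_right)
    finally have "\<bar>poly P d\<bar> \<le> S * (1 + d) ^ degree P" .
    moreover have "1 \<le> (1 + d) ^ degree P" using d by simp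
    ultimately show ?thesis by (simp add: algebra_simps)
  qed
qed

lemma powr_poly_le_power_bound:
  fixes P :: "real poly"
  assumes a: "a \<ge> 0" and s: "s \<ge> 0"
  shows "\<exists>C k. k \<ge> 0 \<and> (\<forall>d \<ge> 0. (a * (\<bar>poly P d\<bar> + 1)) powr s \<le> C * (1 + d) powr k)"
proof -
  obtain A m where A: "A \<ge> 1" "\<And>d. d \<ge> 0 \<Longrightarrow> \<bar>poly P d\<bar> + 1 \<le> A * (1 + d) ^ m"
    using poly_abs_le_power_bound[of P] by blast
  have "(a * (\<bar>poly P d\<bar> + 1)) powr s \<le> (a * A) powr s * (1 + d) powr (real m * s)" if d: "d \<ge> 0" for d
  proof -
    have "(a * (\<bar>poly P d\<bar> + 1)) powr s \<le> (a * (A * (1 + d) ^ m)) powr s"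
      using A(2)[OF d] a s by (intro powr_mono2 mult_left_mono) auto
    also have "\<dots> = (a * A) powr s * (1 + d) powr (real m * s)"
      using A a d by (simp add: powr_mult powr_realpow[symmetric] powr_powr mult.assoc)
    finally show ?thesis .
  qed
  then show ?thesis using s by (intro exI[of _ "(a * A) powr s"] exI[of _ "real m * s"]) auto
qed

lemma weight_powr_ge_one:
  fixes B N p q :: real
  assumes B: "B \<ge> 1" and q: "0 < q" "q < p" and N: "N \<ge> B powr (q * p / (p - q))"
  shows "N * (1 / (B * N powr (1 / p))) powr q \<ge> 1"
proof -
  have "B powr (q * p / (p - q)) \<ge> 1" using B q by (simp add: ge_one_powr_ge_zero)
  then have N0: "N > 0" using N by linarith
  have "(1 / (B * N powr (1 / p))) powr q = B powr (- q) * N powr (- q / p)"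
    using B N0 q by (simp add: powr_divide powr_mult powr_powr powr_minus_divide)
  then have eq: "N * (1 / (B * N powr (1 / p))) powr q = N powr (1 - q / p) / B powr q"
    using N0 B by (simp add: powr_diff powr_minus divide_inverse mult.commute)
  have "q * p / (p - q) * (1 - q / p) = q" using q by (simp add: field_simps)
  then have "(B powr (q * p / (p - q))) powr (1 - q / p) = B powr q" by (simp add: powr_powr)
  then have "B powr q \<le> N powr (1 - q / p)"
    using powr_mono2[of "1 - q / p" "B powr (q * p / (p - q))" N] N q by simp
  then show ?thesis unfolding eq using B by (simp add: le_divide_eq)
qed

lemma weighted_bound_le_geometric:
  fixes a r :: real
  assumes "a \<ge> 0" "r \<ge> 1"
  shows "1 / (2 ^ n * (a + 1) * r) * (2 * (a * r) + 1) \<le> 3 * (1 / 2) ^ n"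
proof -
  have pos: "(a + 1) * r > 0" using assms by simp
  have "2 * (a * r) + 1 \<le> 3 * ((a + 1) * r)" using assms by (simp add: algebra_simps) (smt (verit) mult_nonneg_nonneg)
  then have "(2 * (a * r) + 1) / (2 ^ n * ((a + 1) * r)) \<le> 3 * ((a + 1) * r) / (2 ^ n * ((a + 1) * r))"
    using pos by (intro divide_right_mono) auto
  also have "\<dots> = 3 / 2 ^ n" using assms by simp
  finally show ?thesis by (simp add: power_divide mult.assoc)
qed

lemma summable_weighted_bounds:
  fixes a r :: "nat \<Rightarrow> real"
  assumes a: "\<And>n. a n \<ge> 0" and r: "\<And>n. r n \<ge> 1"
  shows "summable (\<lambda>n. 1 / (2 ^ n * (a n + 1) * r n) * (2 * (a n * r n) + 1))"
proof (rule summable_comparison_test')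
  show "summable (\<lambda>n. 3 * (1 / 2 :: real) ^ n)" by (intro summable_mult summable_geometric) simp
  show "norm (1 / (2 ^ n * (a n + 1) * r n) * (2 * (a n * r n) + 1)) \<le> 3 * (1 / 2) ^ n" for n
    using weighted_bound_le_geometric[OF a r, of n] a[of n] r[of n] by simp
qed

lemma exists_disjoint_sequence:
  fixes R :: "'a set \<Rightarrow> bool" and Q :: "nat \<Rightarrow> 'b \<Rightarrow> 'a set \<Rightarrow> bool"
  assumes R: "R {}" "\<And>S T. R S \<Longrightarrow> R T \<Longrightarrow> R (S \<union> T)"
    and step: "\<And>n S. finite S \<Longrightarrow> R S \<Longrightarrow> \<exists>d F. Q n d F \<and> finite F \<and> R F \<and> F \<inter> S = {}"
  obtains ds Fs where "\<And>n. Q n (ds n) (Fs n)" "\<And>n. finite (Fs n)" "\<And>n. R (Fs n)" "disjoint_family Fs"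
proof -
  define P where "P n S z \<longleftrightarrow> Q n (fst z) (snd z) \<and> finite (snd z) \<and> R (snd z) \<and> snd z \<inter> S = {}"
    for n S z
  define pick where "pick n S = (SOME z. P n S z)" for n S
  have pick: "P n S (pick n S)" if S: "finite S" "R S" for n S
  proof -
    obtain d F where "Q n d F \<and> finite F \<and> R F \<and> F \<inter> S = {}" using step[OF S] by blast
    then have "P n S (d, F)" by (simp add: P_def)
    then show ?thesis unfolding pick_def by (rule someI)
  qed
  define U where "U = rec_nat {} (\<lambda>n S. S \<union> snd (pick n S))"
  define Fs where "Fs n = snd (pick n (U n))" for n
  have U_Suc: "U (Suc n) = U n \<union> Fs n" for n by (simp add: U_def Fs_def)
  have U: "finite (U n) \<and> R (U n)" for n
  proof (induction n)
    case 0
    then show ?case using R(1) by (simp add: U_def)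
  next
    case (Suc n)
    then have "P n (U n) (pick n (U n))" by (intro pick) auto
    then show ?case using Suc R(2) by (simp add: U_Suc Fs_def P_def)
  qed
  have Fs: "P n (U n) (pick n (U n))" for n using U by (intro pick) auto
  have Fs_sub: "Fs m \<subseteq> U n" if "m < n" for m n
    using that by (induction n) (auto simp: U_Suc less_Suc_eq)
  have "disjoint_family Fs"
    unfolding disjoint_family_on_def
  proof (intro ballI impI)
    fix m n :: nat assume "m \<noteq> n"
    then consider "m < n" | "n < m" by linarith
    then show "Fs m \<inter> Fs n = {}"
      using Fs_sub Fs unfolding P_def Fs_def by cases blast+
  qed
  with Fs show ?thesis by (intro that[of "\<lambda>n. fst (pick n (U n))" Fs]) (auto simp: P_def Fs_def)
qed

context group
begin

lemma conv_indicator_le_if_RD: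
  assumes RD: "RD_inequality G p L P" and d: "d \<ge> 0" and F: "finite F" "F \<subseteq> length_ball G L d"
    and f: "f \<in> lp_space G p" and p: "p > 0"
  shows "lp_norm G p (conv G (indicator F) f) \<le> (\<bar>poly P d\<bar> * real (card F) powr (1 / p)) * lp_norm G p f"
proof -
  have carrier: "F \<subseteq> carrier G" using F(2) unfolding length_ball_def by auto
  have "{x \<in> carrier G. (indicator F x :: complex) \<noteq> 0} \<subseteq> F" by (auto simp: indicator_def)
  then have "indicator F \<in> group_algebra G"
    using F(1) unfolding group_algebra_def by (auto intro: finite_subset)
  moreover have "\<forall>x\<in>carrier G. (indicator F x :: complex) \<noteq> 0 \<longrightarrow> L x \<le> d"
    using F(2) unfolding length_ball_def by (auto simp: indicator_def)
  ultimately have "lp_norm G p (conv G (indicator F) f) \<le> poly P d * lp_norm G p (indicator F) * lp_norm G p f"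
    using RD d f unfolding RD_inequality_def by blast
  also have "\<dots> \<le> \<bar>poly P d\<bar> * lp_norm G p (indicator F :: 'a \<Rightarrow> complex) * lp_norm G p f"
    by (intro mult_right_mono) (auto simp: lp_norm_nonneg)
  finally show ?thesis using lp_norm_indicator[OF F(1) carrier p] by simp
qed

lemma indicator_kernel_splits_if_RD:
  assumes RD: "RD_inequality G p L P" and ds: "\<And>n. ds n \<ge> 0" and p: "p > 0"
    and Fs: "\<And>n. finite (Fs n)" "\<And>n. Fs n \<subseteq> length_ball G L (ds n)" "\<And>n z. z \<in> Fs n \<Longrightarrow> inv z \<in> Fs n"
  obtains g :: "nat \<Rightarrow> 'a \<Rightarrow> 'a \<Rightarrow> real"
  where "\<And>n x y. x \<in> carrier G \<Longrightarrow> y \<in> carrier G \<Longrightarrow> g n x y \<ge> 0"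
    "\<And>n x y. x \<in> carrier G \<Longrightarrow> y \<in> carrier G \<Longrightarrow> g n x y + g n y x = indicator (Fs n) (inv x \<otimes> y)"
    "\<And>n. row_sums_le G (g n) (2 * (\<bar>poly P (ds n)\<bar> * real (card (Fs n)) powr (1 / p)) + 1)"
proof -
  have "\<forall>n. \<exists>g. (\<forall>x\<in>carrier G. \<forall>y\<in>carrier G. 0 \<le> g x y \<and> g x y + g y x = indicator (Fs n) (inv x \<otimes> y))
      \<and> row_sums_le G g (2 * (\<bar>poly P (ds n)\<bar> * real (card (Fs n)) powr (1 / p)) + 1)"
  proof
    fix n
    have carrier: "Fs n \<subseteq> carrier G" using Fs(2)[of n] unfolding length_ball_def by auto
    have nonneg: "\<bar>poly P (ds n)\<bar> * real (card (Fs n)) powr (1 / p) \<ge> 0" by simp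
    obtain g where "\<And>x y. x \<in> carrier G \<Longrightarrow> y \<in> carrier G \<Longrightarrow> g x y \<ge> 0"
      "\<And>x y. x \<in> carrier G \<Longrightarrow> y \<in> carrier G \<Longrightarrow> g x y + g y x = indicator (Fs n) (inv x \<otimes> y)"
      "row_sums_le G g (2 * (\<bar>poly P (ds n)\<bar> * real (card (Fs n)) powr (1 / p)) + 1)"
      using indicator_kernel_split[OF Fs(1) carrier Fs(3) p nonneg
          conv_indicator_le_if_RD[OF RD ds Fs(1,2) _ p]] by blast
    then show "\<exists>g. (\<forall>x\<in>carrier G. \<forall>y\<in>carrier G. 0 \<le> g x y \<and> g x y + g y x = indicator (Fs n) (inv x \<otimes> y))
      \<and> row_sums_le G g (2 * (\<bar>poly P (ds n)\<bar> * real (card (Fs n)) powr (1 / p)) + 1)"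
      by blast
  qed
  then obtain g where g: "\<forall>n. (\<forall>x\<in>carrier G. \<forall>y\<in>carrier G.
      0 \<le> g n x y \<and> g n x y + g n y x = indicator (Fs n) (inv x \<otimes> y))
      \<and> row_sums_le G (g n) (2 * (\<bar>poly P (ds n)\<bar> * real (card (Fs n)) powr (1 / p)) + 1)"
    by (rule choice[THEN exE])
  show ?thesis by (rule that[of g]) (use g in blast)+
qed

lemma finite_symmetric_subset:
  assumes A: "A \<subseteq> carrier G" "\<And>x. x \<in> A \<Longrightarrow> inv x \<in> A" and large: "infinite A \<or> N \<le> card A"
  obtains F where "F \<subseteq> A" "finite F" "\<And>x. x \<in> F \<Longrightarrow> inv x \<in> F" "N \<le> card F"
proof (cases "finite A")
  case True
  then show ?thesis using that A large by blast
next
  case False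
  then obtain F' where F': "F' \<subseteq> A" "finite F'" "card F' = N"
    by (meson infinite_arbitrarily_large)
  let ?F = "F' \<union> (\<lambda>x. inv x) ` F'"
  have "\<And>x. x \<in> ?F \<Longrightarrow> inv x \<in> ?F" using F' A(1) by auto
  moreover have "card F' \<le> card ?F" using F' by (intro card_mono) auto
  ultimately show ?thesis using that[of ?F] F' A by auto
qed

lemma large_symmetric_set_avoiding:
  assumes L: "length_function G L" and growth: "\<not> poly_growth G L"
    and S: "finite S" "\<And>x. x \<in> S \<Longrightarrow> inv x \<in> S"
    and k: "k \<ge> 0" and h: "\<And>d. d \<ge> 0 \<Longrightarrow> h d \<le> C * (1 + d) powr k"
  obtains d F where "d \<ge> 0" "finite F" "F \<subseteq> length_ball G L d - S" "\<And>x. x \<in> F \<Longrightarrow> inv x \<in> F"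
    "h d \<le> real (card F)"
proof -
  have "\<not> (\<forall>d \<ge> 0. finite (length_ball G L d) \<and>
      real (card (length_ball G L d)) \<le> (C + real (card S)) * (1 + d) powr k)"
    using growth k unfolding poly_growth_def by blast
  then obtain d where d: "d \<ge> 0" and big: "\<not> (finite (length_ball G L d) \<and>
      real (card (length_ball G L d)) \<le> (C + real (card S)) * (1 + d) powr k)"
    by blast
  let ?A = "length_ball G L d - S"
  have large: "infinite ?A \<or> nat \<lceil>h d\<rceil> \<le> card ?A"
  proof (cases "finite (length_ball G L d)")
    case True
    have "1 \<le> (1 + d) powr k" using d k by (simp add: ge_one_powr_ge_zero)
    then have "real (card S) \<le> real (card S) * (1 + d) powr k"
      by (metis mult.right_neutral mult_left_mono of_nat_0_le_iff)
    then have "h d + real (card S) \<le> (C + real (card S)) * (1 + d) powr k"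
      using h[OF d] by (simp add: distrib_right)
    moreover have "card (length_ball G L d) \<le> card (?A \<union> S)"
      using True S(1) by (intro card_mono) auto
    moreover have "card (?A \<union> S) \<le> card ?A + card S" by (rule card_Un_le)
    ultimately show ?thesis using True big by simp
  qed (use S(1) Diff_infinite_finite in blast)
  have "?A \<subseteq> carrier G" by (auto simp: length_ball_def)
  moreover have "inv x \<in> ?A" if "x \<in> ?A" for x
    using inv_in_length_ball[OF L] S(2)[of "inv x"] that by (auto simp: length_ball_def)
  ultimately obtain F where "F \<subseteq> ?A" "finite F" "\<And>x. x \<in> F \<Longrightarrow> inv x \<in> F" "nat \<lceil>h d\<rceil> \<le> card F"
    using finite_symmetric_subset large by metis
  then show ?thesis using that[OF d] by simp
qed

lemma exists_disjoint_large_symmetric_sets: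
  fixes h :: "nat \<Rightarrow> real \<Rightarrow> real"
  assumes L: "length_function G L" and growth: "\<not> poly_growth G L"
    and h: "\<And>n. \<exists>C k. k \<ge> 0 \<and> (\<forall>d \<ge> 0. h n d \<le> C * (1 + d) powr k)"
  obtains ds Fs where "\<And>n. ds n \<ge> 0" "\<And>n. finite (Fs n)" "\<And>n. Fs n \<subseteq> length_ball G L (ds n)"
    "\<And>n z. z \<in> Fs n \<Longrightarrow> inv z \<in> Fs n" "\<And>n. h n (ds n) \<le> real (card (Fs n))" "disjoint_family Fs"
proof -
  define R where "R S \<longleftrightarrow> S \<subseteq> carrier G \<and> (\<forall>x\<in>S. inv x \<in> S)" for S
  obtain ds Fs where
      Fs: "\<And>n. ds n \<ge> 0 \<and> Fs n \<subseteq> length_ball G L (ds n) \<and> h n (ds n) \<le> real (card (Fs n))"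
      "\<And>n. finite (Fs n)" "\<And>n. R (Fs n)" "disjoint_family Fs"
  proof (rule exists_disjoint_sequence[of R
        "\<lambda>n d F. d \<ge> 0 \<and> F \<subseteq> length_ball G L d \<and> h n d \<le> real (card F)"])
    fix n S assume S: "finite S" "R S"
    obtain C k where Ck: "k \<ge> 0" "\<And>d. d \<ge> 0 \<Longrightarrow> h n d \<le> C * (1 + d) powr k"
      using h[of n] by blast
    have sym: "\<And>x. x \<in> S \<Longrightarrow> inv x \<in> S" using S(2) unfolding R_def by blast
    obtain d F where "d \<ge> 0" "finite F" "F \<subseteq> length_ball G L d - S"
        "\<And>x. x \<in> F \<Longrightarrow> inv x \<in> F" "h n d \<le> real (card F)"
      using large_symmetric_set_avoiding[OF L growth S(1) sym Ck] by blast
    then show "\<exists>d F. (d \<ge> 0 \<and> F \<subseteq> length_ball G L d \<and> h n d \<le> real (card F))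
        \<and> finite F \<and> R F \<and> F \<inter> S = {}"
      unfolding R_def length_ball_def by blast
  qed (auto simp: R_def)
  show ?thesis by (rule that[of ds Fs]) (use Fs in \<open>auto simp: R_def\<close>)
qed

lemma T1_not_subset_lp_if_not_poly_growth:
  assumes L: "length_function G L" and RD: "RD_inequality G p L P" and growth: "\<not> poly_growth G L"
    and q: "0 < q" "q < p"
  shows "\<not> T1 G \<subseteq> lp_space G q"
proof -
  have p: "p > 0" using q by simp
  define s where "s = q * p / (p - q)"
  have s: "s > 0" using q by (simp add: s_def)
  define B where "B n d = 2 ^ n * (\<bar>poly P d\<bar> + 1)" for n d
  have B1: "B n d \<ge> 1" for n d
  proof -
    have "1 * 1 \<le> B n d" unfolding B_def by (intro mult_mono) auto
    then show ?thesis by simp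
  qed
  have "\<exists>C k. k \<ge> 0 \<and> (\<forall>d \<ge> 0. B n d powr s \<le> C * (1 + d) powr k)" for n
    unfolding B_def using s by (intro powr_poly_le_power_bound) auto
  from exists_disjoint_large_symmetric_sets[where h = "\<lambda>n d. B n d powr s", OF L growth this]
  obtain ds Fs where ds: "\<And>n. ds n \<ge> 0" and Fs: "\<And>n. finite (Fs n)"
    "\<And>n. Fs n \<subseteq> length_ball G L (ds n)" "\<And>n z. z \<in> Fs n \<Longrightarrow> inv z \<in> Fs n"
    and large: "\<And>n. B n (ds n) powr s \<le> real (card (Fs n))" and disjoint: "disjoint_family Fs"
    by blast
  have Fs_carrier: "Fs n \<subseteq> carrier G" for n using Fs(2)[of n] unfolding length_ball_def by auto
  define r where "r n = real (card (Fs n)) powr (1 / p)" for n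
  have r: "r n \<ge> 1" for n
    using large[of n] ge_one_powr_ge_zero[OF B1[of n "ds n"], of s] s p
    unfolding r_def by (simp add: ge_one_powr_ge_zero)
  define c where "c n = 1 / (B n (ds n) * r n)" for n
  define K where "K n = 2 * (\<bar>poly P (ds n)\<bar> * r n) + 1" for n
  have c: "c n \<ge> 0" for n unfolding c_def using B1[of n "ds n"] r[of n] by simp
  obtain g :: "nat \<Rightarrow> 'a \<Rightarrow> 'a \<Rightarrow> real" where g: "\<And>n x y. x \<in> carrier G \<Longrightarrow> y \<in> carrier G \<Longrightarrow> g n x y \<ge> 0"
    "\<And>n x y. x \<in> carrier G \<Longrightarrow> y \<in> carrier G \<Longrightarrow> g n x y + g n y x = indicator (Fs n) (inv x \<otimes> y)"
    "\<And>n. row_sums_le G (g n) (2 * (\<bar>poly P (ds n)\<bar> * real (card (Fs n)) powr (1 / p)) + 1)"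
    using indicator_kernel_splits_if_RD[where ds = ds and Fs = Fs, OF RD ds p Fs] by blast
  have rows: "row_sums_le G (g n) (K n)" for n using g(3) unfolding K_def r_def .
  have summable: "summable (\<lambda>n. c n * K n)"
    unfolding c_def K_def B_def using summable_weighted_bounds[OF abs_ge_zero r] by (simp add: mult.assoc)
  let ?f = "\<lambda>w. if \<exists>n. w \<in> Fs n then complex_of_real (c (block_index Fs w)) else 0"
  have "?f \<in> T1 G"
    by (rule block_function_in_T1[OF disjoint Fs_carrier Fs(3) g(1,2) rows c summable])
  moreover have "?f \<notin> lp_space G q"
  proof (rule block_function_not_in_lp[OF disjoint Fs(1) Fs_carrier c])
    show "real (card (Fs n)) * c n powr q \<ge> 1" for n
      unfolding c_def r_def by (rule weight_powr_ge_one[OF B1 q]) (use large[of n] in \<open>simp add: s_def\<close>)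
  qed
  ultimately show ?thesis by blast
qed

end

lemma Lit_ge_if_not_T1_subset_lp:
  assumes "\<And>q. 0 < q \<Longrightarrow> q < p \<Longrightarrow> \<not> T1 G \<subseteq> lp_space G q"
  shows "ereal p \<le> Lit G"
  unfolding Lit_def
proof (rule Inf_greatest)
  fix x assume "x \<in> {ereal q |q. q > 0 \<and> T1 G \<subseteq> lp_space G q}"
  then obtain q where "x = ereal q" "q > 0" "T1 G \<subseteq> lp_space G q" by blast
  then show "ereal p \<le> x" using assms[of q] by force
qed

theorem corollary8p2:
  fixes G :: "('a, 'b) monoid_scheme" and p :: real
  assumes "group G"
    and "\<not> amenable G"
    and "1 \<le> p" and "p \<le> 2"
    and "property_RD G p"
  shows "Lit G \<ge> ereal p"
proof -
  obtain L P where L: "length_function G L" and RD: "RD_inequality G p L P"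
    using assms(5) unfolding property_RD_iff by blast
  have "\<not> poly_growth G L" using group.amenable_if_poly_growth[OF assms(1) L] assms(2) by blast
  then show ?thesis
    using group.T1_not_subset_lp_if_not_poly_growth[OF assms(1) L RD] by (intro Lit_ge_if_not_T1_subset_lp)
qed

end
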